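(* Let $\bm{Z}=(Z_1,\ldots,Z_n)^T\in\{0,1\}^n$ with both treatment groups nonempty, and let $\bm{X}\in\mathbb{R}^{n\times p}$ be a covariate matrix whose first column is the all-ones vector, with rows $\bm{X}_1,\ldots,\bm{X}_n$. Let $\bm{\Sigma}$ be a symmetric positive definite $n\times n$ matrix with orthonormal eigenvectors $\bm{v}_1,\ldots,\bm{v}_n$ ($v_{ki}$ the $i$-th entry of $\bm{v}_k$) and eigenvalues $\lambda_1\ge\cdots\ge\lambda_n>0$. Assume $\bm{X}^T\bm{\Sigma}^{-1}\bm{X}$ is invertible and $\bm{Z}^T\bm{\Sigma}^{-1}(\bm{I}_n-\bm{X}(\bm{X}^T\bm{\Sigma}^{-1}\bm{X})^{-1}\bm{X}^T\bm{\Sigma}^{-1})\bm{Z}\neq0$. Then the solution of $$\min_{\bm{w}\in\mathbb{R}^n}\sum_{k=1}^n\lambda_k\Big(\sum_{i:Z_i=1}w_iv_{ki}-\sum_{i:Z_i=0}w_iv_{ki}\Big)^2$$ subject to $\sum_{i:Z_i=1}w_i=1$, $\sum_{i:Z_i=0}w_i=1$ and $\sum_{i:Z_i=1}w_i\bm{X}_i=\sum_{i:Z_i=0}w_i\bm{X}_i$ is $$\bm{w}=\bm{M}\,\frac{(\bm{I}_n-\bm{\Sigma}^{-1}\bm{X}(\bm{X}^T\bm{\Sigma}^{-1}\bm{X})^{-1}\bm{X}^T)\bm{\Sigma}^{-1}\bm{Z}}{\bm{Z}^T\bm{\Sigma}^{-1}(\bm{I}_n-\bm{X}(\bm{X}^T\bm{\Sigma}^{-1}\bm{X})^{-1}\bm{X}^T\bm{\Sigma}^{-1})\bm{Z}},$$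 with $\bm{M}$ diagonal, $M_{ii}=2Z_i-1$; i.e. the implied weights of the GLS estimator of the treatment coefficient.
   Context: The GLS estimator of $\tau$ in the model $\bm{Y}=\bm{X}\bm{\beta}+\tau\bm{Z}+\bm{\epsilon}$ with error covariance $\bm{\Sigma}$ is the last coordinate of $\big(\begin{pmatrix}\bm{X} & \bm{Z}\end{pmatrix}^T\bm{\Sigma}^{-1}\begin{pmatrix}\bm{X} & \bm{Z}\end{pmatrix}\big)^{-1}\begin{pmatrix}\bm{X} & \bm{Z}\end{pmatrix}^T\bm{\Sigma}^{-1}\bm{Y}$, and equals $\sum_{Z_i=1}w_iY_i-\sum_{Z_i=0}w_iY_i$ with $\bm{w}$ as displayed. *)

theory Defs
  imports "HOL-Analysis.Analysis"
begin

definition treated :: "real^'n \<Rightarrow> 'n set" where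
  "treated Z = {i. Z $ i = 1}"

definition control :: "real^'n \<Rightarrow> 'n set" where
  "control Z = {i. Z $ i = 0}"

definition weight_objective ::
  "('n::finite \<Rightarrow> real) \<Rightarrow> ('n \<Rightarrow> real^'n) \<Rightarrow> real^'n \<Rightarrow> real^'n \<Rightarrow> real" where
  "weight_objective lam v Z w =
     (\<Sum>k\<in>UNIV. lam k *
        ((\<Sum>i\<in>treated Z. w $ i * v k $ i) - (\<Sum>i\<in>control Z. w $ i * v k $ i))\<^sup>2)"

definition weight_feasible :: "real^'p^'n \<Rightarrow> real^'n \<Rightarrow> real^'n \<Rightarrow> bool" where
  "weight_feasible X Z w \<longleftrightarrow>
     (\<Sum>i\<in>treated Z. w $ i) = 1 \<and>
     (\<Sum>i\<in>control Z. w $ i) = 1 \<and>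
     (\<Sum>i\<in>treated Z. w $ i *\<^sub>R X $ i) = (\<Sum>i\<in>control Z. w $ i *\<^sub>R X $ i)"

definition gls_weights :: "real^'n^'n \<Rightarrow> real^'p^'n \<Rightarrow> real^'n \<Rightarrow> real^'n" where
  "gls_weights S X Z =
     (let Si = matrix_inv S;
          G = matrix_inv (transpose X ** Si ** X);
          u = (mat 1 - Si ** X ** G ** transpose X) *v (Si *v Z);
          d = Z \<bullet> (Si *v ((mat 1 - X ** G ** transpose X ** Si) *v Z))
      in (\<chi> i. (2 * Z $ i - 1) * u $ i / d))"

end

theory Submission imports Defs begin

text \<open>Substituting \<open>y = M w\<close> turns the objective into the quadratic form \<open>y\<^sup>T \<Sigma> y\<close>
  (expand \<open>y\<close> in the eigenbasis) and the constraints into the affine conditions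
  \<open>Z\<^sup>T y = 1\<close>, \<open>X\<^sup>T y = 0\<close> (the intercept column turns the balance of the first covariate
  into the control-group normalisation). The GLS vector \<open>u\<close> is feasible and
  \<open>\<Sigma> u\<close> lies in the span of \<open>Z\<close> and the columns of \<open>X\<close>, which is orthogonal to
  every difference \<open>h\<close> of feasible points. Hence \<open>(u + h)\<^sup>T \<Sigma> (u + h) = u\<^sup>T \<Sigma> u + h\<^sup>T \<Sigma> h\<close>,
  and positive definiteness makes \<open>u\<close> the unique minimiser.\<close>

definition sign_flip :: "real^'n \<Rightarrow> real^'n \<Rightarrow> real^'n" where
  "sign_flip Z w = (\<chi> i. (2 * Z $ i - 1) * w $ i)"

lemma sign_flip_sign_flip:
  assumes "\<forall>i. Z $ i = 0 \<or> Z $ i = 1"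
  shows "sign_flip Z (sign_flip Z w) = w"
proof -
  have "(2 * Z $ i - 1) * ((2 * Z $ i - 1) * w $ i) = w $ i" for i
    using assms by (cases "Z $ i = 0") auto
  then show ?thesis by (simp add: sign_flip_def vec_eq_iff)
qed

lemma sum_signed_eq_treated_minus_control:
  fixes f :: "'n::finite \<Rightarrow> 'a::real_vector"
  assumes "\<forall>i. Z $ i = 0 \<or> Z $ i = 1"
  shows "(\<Sum>i\<in>UNIV. (2 * Z $ i - 1) *\<^sub>R f i) = (\<Sum>i\<in>treated Z. f i) - (\<Sum>i\<in>control Z. f i)"
proof -
  have partition: "UNIV = treated Z \<union> control Z" and disjoint: "treated Z \<inter> control Z = {}"
    using assms by (auto simp: treated_def control_def)
  have "(\<Sum>i\<in>UNIV. (2 * Z $ i - 1) *\<^sub>R f i)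
      = (\<Sum>i\<in>treated Z. (2 * Z $ i - 1) *\<^sub>R f i) + (\<Sum>i\<in>control Z. (2 * Z $ i - 1) *\<^sub>R f i)"
    unfolding partition by (rule sum.union_disjoint) (simp_all add: disjoint)
  also have "\<dots> = (\<Sum>i\<in>treated Z. f i) + (\<Sum>i\<in>control Z. - f i)"
    by (intro arg_cong2[where f = "(+)"] sum.cong) (simp_all add: treated_def control_def)
  finally show ?thesis
    by (simp add: sum_negf)
qed

lemma inner_sign_flip:
  assumes "\<forall>i. Z $ i = 0 \<or> Z $ i = 1"
  shows "x \<bullet> sign_flip Z w = (\<Sum>i\<in>treated Z. w $ i * x $ i) - (\<Sum>i\<in>control Z. w $ i * x $ i)"
  using sum_signed_eq_treated_minus_control[OF assms, of "\<lambda>i. w $ i * x $ i"]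
  by (simp add: inner_vec_def sign_flip_def mult_ac)

lemma transpose_mult_sign_flip:
  fixes X :: "real^'p^'n"
  assumes "\<forall>i. Z $ i = 0 \<or> Z $ i = 1"
  shows "transpose X *v sign_flip Z w
           = (\<Sum>i\<in>treated Z. w $ i *\<^sub>R X $ i) - (\<Sum>i\<in>control Z. w $ i *\<^sub>R X $ i)"
  using sum_signed_eq_treated_minus_control[OF assms, of "\<lambda>i. w $ i *\<^sub>R X $ i"]
  by (simp add: vec_eq_iff vector_matrix_mult_def sign_flip_def sum_component mult_ac)

lemma quadratic_form_eigen_expansion:
  fixes S :: "real^'n^'n" and v :: "'n \<Rightarrow> real^'n"
  assumes orthonormal: "\<forall>k l. v k \<bullet> v l = (if k = l then 1 else 0)"
    and eigen: "\<forall>k. S *v v k = lam k *\<^sub>R v k"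
  shows "y \<bullet> (S *v y) = (\<Sum>k\<in>UNIV. lam k * (v k \<bullet> y)\<^sup>2)"
proof -
  define V :: "real^'n^'n" where "V = (\<chi> k. v k)"
  have "V ** transpose V = mat 1"
    using orthonormal
    by (simp add: V_def matrix_matrix_mult_def mat_def vec_eq_iff transpose_def inner_vec_def mult.commute)
  then have "transpose V ** V = mat 1"
    using matrix_left_right_inverse by blast
  then have "y = transpose V *v (V *v y)"
    by (metis matrix_vector_mul_assoc matrix_vector_mul_lid)
  also have "\<dots> = (\<Sum>k\<in>UNIV. (v k \<bullet> y) *\<^sub>R v k)"
    by (simp add: vec_eq_iff vector_matrix_mult_def matrix_vector_mult_def V_def sum_component
        inner_vec_def transpose_def mult.commute)
  finally have expansion: "y = (\<Sum>k\<in>UNIV. (v k \<bullet> y) *\<^sub>R v k)" .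
  have "S *v y = (\<Sum>k\<in>UNIV. ((v k \<bullet> y) * lam k) *\<^sub>R v k)"
    by (subst expansion)
      (simp add: linear_sum[OF matrix_vector_mul_linear] o_def matrix_vector_mult_scaleR eigen)
  then show ?thesis
    by (simp add: inner_sum_right inner_commute power2_eq_square mult_ac)
qed

lemma weight_objective_eq_quadratic_form:
  assumes "\<forall>i. Z $ i = 0 \<or> Z $ i = 1"
    and "\<forall>k l. v k \<bullet> v l = (if k = l then 1 else 0)"
    and "\<forall>k. S *v v k = lam k *\<^sub>R v k"
  shows "weight_objective lam v Z w = sign_flip Z w \<bullet> (S *v sign_flip Z w)"
  by (simp add: weight_objective_def quadratic_form_eigen_expansion[OF assms(2,3)]
      inner_sign_flip[OF assms(1)])

lemma weight_feasible_iff_sign_flip: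
  fixes X :: "real^'p^'n"
  assumes Z01: "\<forall>i. Z $ i = 0 \<or> Z $ i = 1"
    and intercept: "\<forall>i. X $ i $ j = 1"
  shows "weight_feasible X Z w \<longleftrightarrow> Z \<bullet> sign_flip Z w = 1 \<and> transpose X *v sign_flip Z w = 0"
proof -
  have "Z \<bullet> sign_flip Z w = (\<Sum>i\<in>treated Z. w $ i)"
    by (simp add: inner_sign_flip[OF Z01]) (simp add: treated_def control_def)
  moreover have "(\<Sum>i\<in>treated Z. w $ i *\<^sub>R X $ i) $ j = (\<Sum>i\<in>treated Z. w $ i)"
    "(\<Sum>i\<in>control Z. w $ i *\<^sub>R X $ i) $ j = (\<Sum>i\<in>control Z. w $ i)"
    by (simp_all add: sum_component intercept)
  ultimately show ?thesis
    unfolding weight_feasible_def transpose_mult_sign_flip[OF Z01] right_minus_eq by metis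
qed

lemma pos_definite_invertible:
  fixes S :: "real^'n^'n"
  assumes "\<forall>x. x \<noteq> 0 \<longrightarrow> x \<bullet> (S *v x) > 0"
  shows "invertible S"
proof -
  have "inj ((*v) S)"
  proof (rule injI)
    fix x y assume "S *v x = S *v y"
    then have "(x - y) \<bullet> (S *v (x - y)) = 0"
      by (simp add: matrix_vector_mult_diff_distrib)
    then show "x = y" using assms by (metis less_irrefl right_minus_eq)
  qed
  then show ?thesis
    using matrix_left_invertible_injective invertible_left_inverse by blast
qed

lemma matrix_mul_matrix_inv:
  fixes A :: "'a::semiring_1^'n^'m"
  assumes "invertible A"
  shows "A ** matrix_inv A = mat 1"
  using someI_ex[OF assms[unfolded invertible_def]] by (simp add: matrix_inv_def)

lemma quadratic_form_less_add_orthogonal: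
  fixes S :: "real^'n^'n"
  assumes sym: "transpose S = S"
    and pos: "\<forall>x. x \<noteq> 0 \<longrightarrow> x \<bullet> (S *v x) > 0"
    and orth: "h \<bullet> (S *v u) = 0"
    and "h \<noteq> 0"
  shows "u \<bullet> (S *v u) < (u + h) \<bullet> (S *v (u + h))"
proof -
  have "u \<bullet> (S *v h) = (transpose S *v u) \<bullet> h"
    by (simp add: dot_lmul_matrix)
  then have "u \<bullet> (S *v h) = 0"
    using sym orth by (simp add: inner_commute)
  then have "(u + h) \<bullet> (S *v (u + h)) = u \<bullet> (S *v u) + h \<bullet> (S *v h)"
    using orth by (simp add: matrix_vector_right_distrib inner_add_left inner_add_right)
  then show ?thesis
    using pos \<open>h \<noteq> 0\<close> by simp
qed

definition gls_direction :: "real^'n^'n \<Rightarrow> real^'p^'n \<Rightarrow> real^'n \<Rightarrow> real^'n" where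
  "gls_direction S X Z =
     (let Si = matrix_inv S; G = matrix_inv (transpose X ** Si ** X)
      in (mat 1 - Si ** X ** G ** transpose X) *v (Si *v Z))"

definition gls_vector :: "real^'n^'n \<Rightarrow> real^'p^'n \<Rightarrow> real^'n \<Rightarrow> real^'n" where
  "gls_vector S X Z = (1 / (Z \<bullet> gls_direction S X Z)) *\<^sub>R gls_direction S X Z"

lemma gls_direction_eq:
  "gls_direction S X Z = matrix_inv S *v (Z - X *v (matrix_inv (transpose X ** matrix_inv S ** X)
                                         *v (transpose X *v (matrix_inv S *v Z))))"
  by (simp add: gls_direction_def Let_def matrix_vector_mult_diff_rdistrib
      matrix_vector_mult_diff_distrib matrix_vector_mul_assoc[symmetric] del: transpose_matrix_vector)

lemma inner_gls_direction:
  "Z \<bullet> gls_direction S X Z =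
     Z \<bullet> (matrix_inv S *v ((mat 1 - X ** matrix_inv (transpose X ** matrix_inv S ** X)
            ** transpose X ** matrix_inv S) *v Z))"
  by (simp add: gls_direction_def Let_def matrix_vector_mult_diff_rdistrib
      matrix_vector_mult_diff_distrib matrix_vector_mul_assoc[symmetric])

lemma gls_weights_eq_sign_flip_gls_vector:
  "gls_weights S X Z = sign_flip Z (gls_vector S X Z)"
  by (simp add: gls_weights_def gls_vector_def inner_gls_direction sign_flip_def vec_eq_iff)
     (simp add: gls_direction_def Let_def)

lemma transpose_mult_gls_direction:
  assumes "invertible (transpose X ** matrix_inv S ** X)"
  shows "transpose X *v gls_direction S X Z = 0"
proof -
  define A where "A = transpose X ** matrix_inv S ** X"
  define c where "c = transpose X *v (matrix_inv S *v Z)"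
  have "transpose X *v gls_direction S X Z = c - (A ** matrix_inv A) *v c"
    by (simp add: gls_direction_eq A_def c_def matrix_vector_mult_diff_distrib
        matrix_vector_mul_assoc matrix_mul_assoc del: transpose_matrix_vector)
  then show ?thesis
    using matrix_mul_matrix_inv[OF assms] by (simp add: A_def)
qed

lemma mult_gls_direction:
  assumes "invertible S"
  obtains b where "S *v gls_direction S X Z = Z - X *v b"
proof
  show "S *v gls_direction S X Z = Z - X *v (matrix_inv (transpose X ** matrix_inv S ** X)
                                         *v (transpose X *v (matrix_inv S *v Z)))"
    unfolding gls_direction_eq matrix_vector_mul_assoc matrix_mul_matrix_inv[OF assms] by simp
qed

lemma gls_vector_feasible:
  assumes "invertible (transpose X ** matrix_inv S ** X)"
    and "Z \<bullet> gls_direction S X Z \<noteq> 0"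
  shows "Z \<bullet> gls_vector S X Z = 1" and "transpose X *v gls_vector S X Z = 0"
  using assms transpose_mult_gls_direction[OF assms(1)]
  by (simp_all add: gls_vector_def matrix_vector_mult_scaleR)

lemma inner_eq_0_if_balanced:
  fixes X :: "real^'p^'n"
  assumes "Z \<bullet> h = 0" and "transpose X *v h = 0"
  shows "h \<bullet> (c *\<^sub>R (Z - X *v b)) = 0"
proof -
  have "h \<bullet> (X *v b) = (transpose X *v h) \<bullet> b"
    by (simp add: dot_lmul_matrix)
  then show ?thesis
    using assms by (simp add: inner_diff_right inner_commute)
qed

lemma quadratic_form_gls_vector_less:
  fixes S :: "real^'n^'n"
  assumes sym: "transpose S = S"
    and pos: "\<forall>x. x \<noteq> 0 \<longrightarrow> x \<bullet> (S *v x) > 0"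
    and XSX_inv: "invertible (transpose X ** matrix_inv S ** X)"
    and denom: "Z \<bullet> gls_direction S X Z \<noteq> 0"
    and y: "Z \<bullet> y = 1" "transpose X *v y = 0" "y \<noteq> gls_vector S X Z"
  shows "gls_vector S X Z \<bullet> (S *v gls_vector S X Z) < y \<bullet> (S *v y)"
proof -
  define u where "u = gls_vector S X Z"
  obtain b where "S *v gls_direction S X Z = Z - X *v b"
    using mult_gls_direction[OF pos_definite_invertible[OF pos]] .
  then have Su: "S *v u = (1 / (Z \<bullet> gls_direction S X Z)) *\<^sub>R (Z - X *v b)"
    by (simp add: u_def gls_vector_def matrix_vector_mult_scaleR)
  have "Z \<bullet> (y - u) = 0" "transpose X *v (y - u) = 0"
    using y gls_vector_feasible[OF XSX_inv denom]
    by (simp_all add: u_def inner_diff_right matrix_vector_mult_diff_distrib)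
  then have "(y - u) \<bullet> (S *v u) = 0"
    unfolding Su by (rule inner_eq_0_if_balanced)
  then show ?thesis
    using quadratic_form_less_add_orthogonal[OF sym pos, of "y - u" u] y by (simp add: u_def)
qed

theorem mainTheorem3:
  fixes Z :: "real^('n::{finite,wellorder})"
    and X :: "real^('p::{finite,wellorder})^('n::{finite,wellorder})"
    and S :: "real^('n::{finite,wellorder})^('n::{finite,wellorder})"
    and v :: "'n::{finite,wellorder} \<Rightarrow> real^'n::{finite,wellorder}"
    and lam :: "'n::{finite,wellorder} \<Rightarrow> real"
  assumes Z01: "\<forall>i. Z $ i = 0 \<or> Z $ i = 1"
    and treated_ne: "\<exists>i. Z $ i = 1"
    and control_ne: "\<exists>i. Z $ i = 0"
    and intercept: "\<forall>i. X $ i $ (LEAST j::'p. True) = 1"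
    and S_sym: "transpose S = S"
    and S_pd: "\<forall>x. x \<noteq> 0 \<longrightarrow> x \<bullet> (S *v x) > 0"
    and v_orthonormal: "\<forall>k l. v k \<bullet> v l = (if k = l then 1 else 0)"
    and v_eigen: "\<forall>k. S *v v k = lam k *\<^sub>R v k"
    and lam_decr: "\<forall>k l. k \<le> l \<longrightarrow> lam l \<le> lam k"
    and lam_pos: "\<forall>k. lam k > 0"
    and XSX_inv: "invertible (transpose X ** matrix_inv S ** X)"
    and denom_nz: "Z \<bullet> (matrix_inv S *v ((mat 1 - X ** matrix_inv (transpose X ** matrix_inv S ** X)
                     ** transpose X ** matrix_inv S) *v Z)) \<noteq> 0"
  shows "weight_feasible X Z (gls_weights S X Z) \<and>
         (\<forall>w. weight_feasible X Z w \<and> w \<noteq> gls_weights S X Z \<longrightarrow>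
              weight_objective lam v Z (gls_weights S X Z) < weight_objective lam v Z w)"
proof -
  note feasible_iff = weight_feasible_iff_sign_flip[OF Z01 intercept]
  note objective = weight_objective_eq_quadratic_form[OF Z01 v_orthonormal v_eigen]
  note flip_flip = sign_flip_sign_flip[OF Z01]
  define u where "u = gls_vector S X Z"
  have denom: "Z \<bullet> gls_direction S X Z \<noteq> 0"
    using denom_nz by (simp add: inner_gls_direction)
  have gls: "gls_weights S X Z = sign_flip Z u"
    by (simp add: u_def gls_weights_eq_sign_flip_gls_vector)
  show ?thesis
  proof (intro conjI allI impI)
    show "weight_feasible X Z (gls_weights S X Z)"
      using gls_vector_feasible[OF XSX_inv denom] by (simp add: gls u_def feasible_iff flip_flip)
  next
    fix w assume w: "weight_feasible X Z w \<and> w \<noteq> gls_weights S X Z"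
    then have "sign_flip Z w \<noteq> u"
      using gls flip_flip by metis
    moreover have "Z \<bullet> sign_flip Z w = 1" "transpose X *v sign_flip Z w = 0"
      using w feasible_iff by blast+
    ultimately have "u \<bullet> (S *v u) < sign_flip Z w \<bullet> (S *v sign_flip Z w)"
      unfolding u_def by (rule quadratic_form_gls_vector_less[OF S_sym S_pd XSX_inv denom, rotated 2])
    then show "weight_objective lam v Z (gls_weights S X Z) < weight_objective lam v Z w"
      by (simp add: gls objective flip_flip)
  qed
qed

end
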